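(* Let $\rho>0$, $L\ge1$, $\bar\eta>0$, and let $X$ have density $f(x)=2K_0(2\sqrt x)$ on $(0,\infty)$. Then $$\bar P_b:=E\!\left[Q\!\left(\sqrt{\tfrac{\rho L^2\bar\eta X}{2}}\right)\right]=\frac{2}{\pi L\sqrt{\rho\bar\eta}}\int_0^{\pi/2}\exp\!\left(\frac{2\sin^2\theta}{\rho L^2\bar\eta}\right)W_{-\frac12,0}\!\left(\frac{4\sin^2\theta}{\rho L^2\bar\eta}\right)\sin\theta\,d\theta .$$
   Context: $Q(y)=\frac{1}{\sqrt{2\pi}}\int_y^\infty e^{-t^2/2}dt$ is the Gaussian Q-function; $K_0$ is the zeroth-order modified Bessel function of the second kind; $W_{\kappa,\mu}$ is the Whittaker function, $W_{\kappa,\mu}(z)=e^{-z/2}z^{\mu+1/2}U(\tfrac12+\mu-\kappa,1+2\mu,z)$ with $U$ Tricomi's confluent hypergeometric function. *)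

theory Defs
  imports "HOL-Probability.Probability"
begin

definition gaussQ :: "real \<Rightarrow> real" where
  "gaussQ y = (1 / sqrt (2 * pi)) * (LBINT t:{y..}. exp (- (t ^ 2) / 2))"

definition besselK0 :: "real \<Rightarrow> real" where
  "besselK0 x = (LBINT t:{0..}. exp (- x * cosh t))"

definition tricomiU :: "real \<Rightarrow> real \<Rightarrow> real \<Rightarrow> real" where
  "tricomiU a b z = (1 / Gamma a) *
     (LBINT t:{0<..}. exp (- z * t) * t powr (a - 1) * (1 + t) powr (b - a - 1))"

definition whittakerW :: "real \<Rightarrow> real \<Rightarrow> real \<Rightarrow> real" where
  "whittakerW \<kappa> \<mu> z = exp (- z / 2) * z powr (\<mu> + 1/2) * tricomiU (1/2 + \<mu> - \<kappa>) (1 + 2 * \<mu>) z"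

end

theory Submission
  imports Defs
begin

text \<open>
  Put c = \<rho> L^2 \<eta>. Both sides equal the integral over v > 0 of
  e^(-v) (1 - sqrt (c v / (c v + 4))) / 2.
  Left side: K_0 is a scale mixture of exponentials, 2 K_0(2 sqrt x) = \<integral> e^(-v - x/v) dv/v
  (substitute v = sqrt x e^u in \<integral> e^(-2 sqrt x cosh u) du), so X is exponential with a random
  mean v; and the Laplace transform of Q(sqrt (a x)) at p is (1 - sqrt (a/(a+2p)))/(2p), by Fubini
  against the Gaussian density and two Gaussian integrals.
  Right side: e^(z/2) W_{-1/2,0}(z) = sqrt z U(1,1,z) = sqrt z \<integral> e^(-v)/(z+v) dv; after Fubini the
  \<theta>-integral is elementary, \<integral>_0^(\<pi>/2) sin^2 \<theta> / (sin^2 \<theta> + b) d\<theta> = \<pi>/2 (1 - sqrt (b/(1+b))),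
  with primitive \<theta> - sqrt (b/(1+b)) arctan (sqrt ((1+b)/b) tan \<theta>).
\<close>

section \<open>Measurability and elementary integrals\<close>

lemma borel_measurable_lborel_integral_pair:
  fixes f :: "real \<Rightarrow> real \<Rightarrow> real"
  assumes "case_prod f \<in> borel_measurable (borel \<Otimes>\<^sub>M borel)"
  shows "(\<lambda>x. \<integral>y. f x y \<partial>lborel) \<in> borel_measurable borel"
proof -
  have "case_prod f \<in> borel_measurable (borel \<Otimes>\<^sub>M lborel)"
    using assms by (simp add: measurable_cong_sets[OF sets_pair_measure_cong[OF refl sets_lborel] refl])
  then show ?thesis by (rule lborel.borel_measurable_lebesgue_integral)
qed

lemma borel_measurable_cosh_real[measurable]: "(cosh :: real \<Rightarrow> real) \<in> borel_measurable borel"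
  unfolding cosh_def[abs_def] by measurable

lemma borel_measurable_gaussQ[measurable]: "gaussQ \<in> borel_measurable borel"
  unfolding gaussQ_def set_lebesgue_integral_def
  by (intro borel_measurable_times borel_measurable_const borel_measurable_lborel_integral_pair)
     (simp add: indicator_def)

lemma borel_measurable_besselK0[measurable]: "besselK0 \<in> borel_measurable borel"
  unfolding besselK0_def set_lebesgue_integral_def
  by (intro borel_measurable_lborel_integral_pair) (simp add: indicator_def)

lemma borel_measurable_tricomiU[measurable]: "tricomiU a b \<in> borel_measurable borel"
  unfolding tricomiU_def set_lebesgue_integral_def
  by (intro borel_measurable_times borel_measurable_const borel_measurable_lborel_integral_pair)
     (simp add: indicator_def)

lemma interval_integral_nonneg_eq_nn_integral:
  fixes f :: "real \<Rightarrow> real"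
  assumes [measurable]: "f \<in> borel_measurable borel"
    and "a \<le> b" and nonneg: "\<And>x. x \<in> {a<..<b} \<Longrightarrow> 0 \<le> f x"
  shows "(LBINT x=ereal a..ereal b. f x) = enn2real (\<integral>\<^sup>+x\<in>{a<..<b}. ennreal (f x) \<partial>lborel)"
proof -
  have "(LBINT x=ereal a..ereal b. f x) = (\<integral>x. f x * indicator {a<..<b} x \<partial>lborel)"
    using \<open>a \<le> b\<close>
    by (auto simp: interval_lebesgue_integral_def set_lebesgue_integral_def einterval_iff mult.commute
        intro!: Bochner_Integration.integral_cong split: split_indicator)
  also have "\<dots> = enn2real (\<integral>\<^sup>+x. ennreal (f x * indicator {a<..<b} x) \<partial>lborel)"
    using nonneg by (intro integral_eq_nn_integral AE_I2) (auto split: split_indicator)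
  finally show ?thesis
    by (simp only: nn_integral_set_ennreal)
qed

lemma gaussQ_nonneg: "0 \<le> gaussQ y"
  unfolding gaussQ_def set_lebesgue_integral_def
  by (auto intro!: Bochner_Integration.integral_nonneg split: split_indicator)

lemma tricomiU_nonneg: "a > 0 \<Longrightarrow> 0 \<le> tricomiU a b z"
  unfolding tricomiU_def set_lebesgue_integral_def
  by (auto intro!: Bochner_Integration.integral_nonneg Gamma_real_pos split: split_indicator)

lemma nn_integral_exp_neg_atLeast:
  assumes "c > 0"
  shows "(\<integral>\<^sup>+t\<in>{0..}. ennreal (exp (- c * t)) \<partial>lborel) = ennreal (1 / c)"
proof -
  have "(\<integral>\<^sup>+t\<in>{0..}. ennreal (exp (- c * t)) \<partial>lborel) = ennreal (0 - (- exp (- c * 0) / c))"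
  proof (rule nn_integral_FTC_atLeast)
    show "((\<lambda>t. - exp (- c * t) / c) \<longlongrightarrow> 0) at_top"
      using assms by real_asymp
  qed (use assms in \<open>auto intro!: derivative_eq_intros\<close>)
  then show ?thesis by simp
qed

lemma nn_integral_exp_neg_atLeastAtMost:
  assumes "T \<ge> 0" "p > 0"
  shows "(\<integral>\<^sup>+x\<in>{0..T}. ennreal (exp (- p * x)) \<partial>lborel) = ennreal ((1 - exp (- p * T)) / p)"
proof -
  have "((\<lambda>x. exp (- p * x)) has_integral (- exp (- p * T) / p) - (- exp (- p * 0) / p)) {0..T}"
    using assms
    by (intro fundamental_theorem_of_calculus)
       (auto intro!: derivative_eq_intros simp: has_real_derivative_iff_has_vector_derivative[symmetric])
  then have "((\<lambda>x. exp (- p * x)) has_integral (1 - exp (- p * T)) / p) {0..T}"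
    by (simp add: diff_divide_distrib)
  then show ?thesis by (intro nn_integral_has_integral_lebesgue') auto
qed

lemma has_integral_exp_neg_sq_atLeast:
  assumes "k > 0"
  shows "((\<lambda>t. exp (- k * t\<^sup>2)) has_integral sqrt pi / (2 * sqrt k)) {0..}"
proof -
  have std: "(\<integral>\<^sup>+x. ennreal (indicator {0..} x *\<^sub>R exp (- x\<^sup>2)) \<partial>lborel) = ennreal (sqrt pi / 2)"
    using gaussian_moment_0 by (subst nn_integral_eq_integral) (auto simp: has_bochner_integral_iff)
  have "(\<integral>\<^sup>+t. ennreal (indicator {0..} t * exp (- k * t\<^sup>2)) \<partial>lborel)
     = ennreal (1 / sqrt k) * (\<integral>\<^sup>+x. ennreal (indicator {0..} (0 + (1/sqrt k) * x) * exp (- k * (0 + (1/sqrt k) * x)\<^sup>2)) \<partial>lborel)"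
    by (subst nn_integral_real_affine[where c="1/sqrt k" and t=0]) (use assms in auto)
  also have "\<dots> = ennreal (1 / sqrt k) * (\<integral>\<^sup>+x. ennreal (indicator {0..} x *\<^sub>R exp (- x\<^sup>2)) \<partial>lborel)"
    using assms by (intro arg_cong2[where f="(*)"] refl nn_integral_cong)
      (auto simp: power_divide zero_le_divide_iff split: split_indicator)
  also have "\<dots> = ennreal (sqrt pi / (2 * sqrt k))"
    using std assms by (simp add: ennreal_mult[symmetric])
  finally have "((\<lambda>t. indicator {0..} t * exp (- k * t\<^sup>2)) has_integral sqrt pi / (2 * sqrt k)) UNIV"
    using assms by (intro nn_integral_has_integral) auto
  then have "((\<lambda>t. if t \<in> {0..} then exp (- k * t\<^sup>2) else 0) has_integral sqrt pi / (2 * sqrt k)) UNIV"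
    by (rule has_integral_cong[THEN iffD1, rotated]) (simp add: indicator_def)
  then show ?thesis
    by (rule has_integral_restrict_UNIV[THEN iffD1])
qed

section \<open>The Laplace transform of \<open>Q(\<surd>(a x))\<close>\<close>

lemma measurable_pred_mem_atLeast[measurable (raw)]:
  fixes f g :: "'a \<Rightarrow> real"
  shows "f \<in> borel_measurable M \<Longrightarrow> g \<in> borel_measurable M \<Longrightarrow> Measurable.pred M (\<lambda>x. f x \<in> {g x..})"
  by (simp add: atLeast_iff)

lemma ennreal_gaussQ:
  "ennreal (gaussQ y) = (\<integral>\<^sup>+t\<in>{y..}. ennreal (std_normal_density t) \<partial>lborel)"
proof -
  have "integrable lborel (\<lambda>t. indicator {y..} t * std_normal_density t)"
    using integrable_mult_indicator[OF _ integrable_normal_density[where \<mu>=0 and \<sigma>=1], of "{y..}"]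
    by simp
  moreover have "gaussQ y = (\<integral>t. indicator {y..} t * std_normal_density t \<partial>lborel)"
    unfolding gaussQ_def set_lebesgue_integral_def std_normal_density_def
    by (simp add: integral_mult_right_zero[symmetric] ac_simps del: integral_mult_right_zero)
  ultimately have "ennreal (gaussQ y) = (\<integral>\<^sup>+t. ennreal (std_normal_density t * indicator {y..} t) \<partial>lborel)"
    by (subst nn_integral_eq_integral) (auto simp: mult.commute)
  then show ?thesis
    by (simp only: nn_integral_set_ennreal)
qed

lemma nn_integral_exp_neg_sqrt_le:
  assumes "a > 0" "p > 0"
  shows "(\<integral>\<^sup>+x\<in>{0<..}. ennreal (exp (- p * x)) * indicator {sqrt (a * x)..} t \<partial>lborel)
       = ennreal ((1 - exp (- p * (t\<^sup>2 / a))) / p) * indicator {0..} t"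
proof (cases "t \<ge> 0")
  case False
  have "\<not> sqrt (a * x) \<le> t" if "x > 0" for x
  proof -
    have "0 \<le> sqrt (a * x)" using assms that by simp
    then show ?thesis using False by linarith
  qed
  then have "(\<integral>\<^sup>+x\<in>{0<..}. ennreal (exp (- p * x)) * indicator {sqrt (a * x)..} t \<partial>lborel)
      = (\<integral>\<^sup>+x. 0 \<partial>(lborel :: real measure))"
    by (intro nn_integral_cong) (auto split: split_indicator)
  then show ?thesis using False by simp
next
  case True
  have "sqrt (a * x) \<le> t \<longleftrightarrow> x \<le> t\<^sup>2 / a" if "x > 0" for x
    using assms that True real_sqrt_le_iff[of "a * x" "t\<^sup>2"]
    by (simp add: pos_le_divide_eq mult.commute)
  then have "(\<integral>\<^sup>+x\<in>{0<..}. ennreal (exp (- p * x)) * indicator {sqrt (a * x)..} t \<partial>lborel)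
       = (\<integral>\<^sup>+x\<in>{0..t\<^sup>2 / a}. ennreal (exp (- p * x)) \<partial>lborel)"
    by (intro nn_integral_cong_AE, use AE_lborel_singleton[of 0] in eventually_elim)
       (auto split: split_indicator)
  also have "\<dots> = ennreal ((1 - exp (- p * (t\<^sup>2 / a))) / p)"
    using assms by (intro nn_integral_exp_neg_atLeastAtMost) auto
  finally show ?thesis using True by simp
qed


lemma has_integral_std_normal_density_exp_neg_sq:
  assumes "a > 0" "p > 0"
  shows "((\<lambda>t. std_normal_density t * ((1 - exp (- p * (t\<^sup>2 / a))) / p))
          has_integral (1 - sqrt (a / (a + 2 * p))) / (2 * p)) {0..}"
proof -
  define C where "C = 1 / (p * sqrt (2 * pi))"
  define k where "k = 1/2 + p / a"
  have "k > 0" using assms by (simp add: k_def add_pos_pos)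
  have "((\<lambda>t. C * exp (- (1/2) * t\<^sup>2) - C * exp (- k * t\<^sup>2))
         has_integral C * (sqrt pi / (2 * sqrt (1/2))) - C * (sqrt pi / (2 * sqrt k))) {0..}"
    using \<open>k > 0\<close>
    by (intro has_integral_diff has_integral_mult_right has_integral_exp_neg_sq_atLeast) auto
  moreover have "std_normal_density t * ((1 - exp (- p * (t\<^sup>2 / a))) / p)
               = C * exp (- (1/2) * t\<^sup>2) - C * exp (- k * t\<^sup>2)" for t
  proof -
    have "exp (- k * t\<^sup>2) = exp (- (1/2) * t\<^sup>2) * exp (- p * (t\<^sup>2 / a))"
      unfolding k_def exp_add[symmetric] by (simp add: field_simps)
    then show ?thesis
      unfolding std_normal_density_def C_def using assms by (simp add: field_simps)
  qed
  moreover have "C * (sqrt pi / (2 * sqrt (1/2))) - C * (sqrt pi / (2 * sqrt k))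
               = (1 - sqrt (a / (a + 2 * p))) / (2 * p)"
  proof -
    define s where "s = sqrt ((a + 2 * p) / a)"
    have "s > 0" using assms by (simp add: s_def)
    have "k = (a + 2 * p) / a / 2" using assms by (simp add: k_def field_simps)
    then have "sqrt k = s / sqrt 2" by (simp add: s_def real_sqrt_divide real_sqrt_mult)
    moreover have "sqrt (a / (a + 2 * p)) = 1 / s" by (simp add: s_def real_sqrt_divide)
    moreover have "sqrt (2 * pi) = sqrt 2 * sqrt pi" "sqrt (1/2) = 1 / sqrt (2::real)"
      by (simp_all add: real_sqrt_mult real_sqrt_divide)
    ultimately show ?thesis
      using assms \<open>s > 0\<close> unfolding C_def by (simp add: field_simps)
  qed
  ultimately show ?thesis by simp
qed

lemma nn_integral_exp_neg_gaussQ_sqrt: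
  assumes "a > 0" "p > 0"
  shows "(\<integral>\<^sup>+x\<in>{0<..}. ennreal (exp (- p * x) * gaussQ (sqrt (a * x))) \<partial>lborel)
       = ennreal ((1 - sqrt (a / (a + 2 * p))) / (2 * p))"
proof -
  have "(\<integral>\<^sup>+x\<in>{0<..}. ennreal (exp (- p * x) * gaussQ (sqrt (a * x))) \<partial>lborel)
      = (\<integral>\<^sup>+x. \<integral>\<^sup>+t. ennreal (exp (- p * x)) * indicator {0<..} x *
            (ennreal (std_normal_density t) * indicator {sqrt (a * x)..} t) \<partial>lborel \<partial>lborel)"
    by (intro nn_integral_cong)
       (simp add: ennreal_gaussQ ennreal_mult' gaussQ_nonneg nn_integral_cmult[symmetric] ac_simps)
  also have "\<dots> = (\<integral>\<^sup>+t. \<integral>\<^sup>+x. ennreal (exp (- p * x)) * indicator {0<..} x *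
            (ennreal (std_normal_density t) * indicator {sqrt (a * x)..} t) \<partial>lborel \<partial>lborel)"
    by (rule lborel_pair.Fubini') measurable
  also have "\<dots> = (\<integral>\<^sup>+t\<in>{0..}. ennreal (std_normal_density t * ((1 - exp (- p * (t\<^sup>2 / a))) / p)) \<partial>lborel)"
  proof (intro nn_integral_cong)
    fix t :: real
    have "(\<integral>\<^sup>+x. ennreal (exp (- p * x)) * indicator {0<..} x *
            (ennreal (std_normal_density t) * indicator {sqrt (a * x)..} t) \<partial>lborel)
        = ennreal (std_normal_density t) *
          (\<integral>\<^sup>+x\<in>{0<..}. ennreal (exp (- p * x)) * indicator {sqrt (a * x)..} t \<partial>lborel)"
      by (subst nn_integral_cmult[symmetric]) (auto intro!: nn_integral_cong simp: ac_simps)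
    also have "\<dots> = ennreal (std_normal_density t * ((1 - exp (- p * (t\<^sup>2 / a))) / p)) * indicator {0..} t"
      unfolding nn_integral_exp_neg_sqrt_le[OF assms] by (subst ennreal_mult') (simp_all add: mult.assoc)
    finally show "(\<integral>\<^sup>+x. ennreal (exp (- p * x)) * indicator {0<..} x *
            (ennreal (std_normal_density t) * indicator {sqrt (a * x)..} t) \<partial>lborel)
        = ennreal (std_normal_density t * ((1 - exp (- p * (t\<^sup>2 / a))) / p)) * indicator {0..} t" .
  qed
  also have "\<dots> = ennreal ((1 - sqrt (a / (a + 2 * p))) / (2 * p))"
    using assms by (intro nn_integral_has_integral_lebesgue' has_integral_std_normal_density_exp_neg_sq)
      (auto simp: mult_nonneg_nonneg)
  finally show ?thesis .
qed

section \<open>\<open>K\<^sub>0\<close> as a scale mixture of exponentials\<close>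

lemma nn_integral_lborel_even:
  fixes g :: "real \<Rightarrow> ennreal"
  assumes [measurable]: "g \<in> borel_measurable borel" and even: "\<And>u. g (- u) = g u"
  shows "(\<integral>\<^sup>+u. g u \<partial>lborel) = 2 * (\<integral>\<^sup>+u\<in>{0..}. g u \<partial>lborel)"
proof -
  have "(\<integral>\<^sup>+u. g u \<partial>lborel) = (\<integral>\<^sup>+u. g u * indicator {0..} u + g u * indicator {..<0} u \<partial>lborel)"
    by (intro nn_integral_cong) (auto split: split_indicator)
  also have "\<dots> = (\<integral>\<^sup>+u\<in>{0..}. g u \<partial>lborel) + (\<integral>\<^sup>+u\<in>{..<0}. g u \<partial>lborel)"
    by (rule nn_integral_add) auto
  also have "(\<integral>\<^sup>+u\<in>{..<0}. g u \<partial>lborel)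
      = ennreal \<bar>-1::real\<bar> * (\<integral>\<^sup>+u. g (0 + (-1) * u) * indicator {..<0} (0 + (-1) * u) \<partial>lborel)"
    by (rule nn_integral_real_affine) auto
  also have "\<dots> = (\<integral>\<^sup>+u\<in>{0..}. g u \<partial>lborel)"
    by (simp, intro nn_integral_cong_AE)
       (use AE_lborel_singleton[of 0] in \<open>eventually_elim, auto simp: even split: split_indicator\<close>)
  finally show ?thesis by (simp add: mult_2)
qed

lemma half_le_cosh: "u / 2 \<le> cosh (u::real)"
proof -
  have "1 + u \<le> exp u" by (rule exp_ge_add_one_self)
  moreover have "0 < exp (- u)" by simp
  ultimately have "u \<le> exp u + exp (- u)" by linarith
  then show ?thesis unfolding cosh_field_def by simp
qed

lemma ennreal_besselK0:
  assumes "x > 0"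
  shows "ennreal (2 * besselK0 x) = (\<integral>\<^sup>+u. ennreal (exp (- x * cosh u)) \<partial>lborel)"
proof -
  have "(\<integral>\<^sup>+u\<in>{0..}. ennreal (exp (- x * cosh u)) \<partial>lborel)
      \<le> (\<integral>\<^sup>+u\<in>{0..}. ennreal (exp (- (x / 2) * u)) \<partial>lborel)"
    using assms half_le_cosh
    by (intro nn_integral_mono) (auto split: split_indicator intro!: ennreal_leI mult_left_mono)
  also have "\<dots> = ennreal (1 / (x / 2))"
    by (rule nn_integral_exp_neg_atLeast) (use assms in simp)
  also have "\<dots> < \<infinity>"
    by simp
  finally have "integrable lborel (\<lambda>u. exp (- x * cosh u) * indicator {0..} u)"
    by (intro integrableI_nonneg AE_I2) (auto simp: nn_integral_set_ennreal top_unique)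
  then have "ennreal (besselK0 x) = (\<integral>\<^sup>+u. ennreal (exp (- x * cosh u) * indicator {0..} u) \<partial>lborel)"
    unfolding besselK0_def set_lebesgue_integral_def
    by (subst nn_integral_eq_integral) (auto simp: mult.commute)
  then have "ennreal (besselK0 x) = (\<integral>\<^sup>+u\<in>{0..}. ennreal (exp (- x * cosh u)) \<partial>lborel)"
    by (simp only: nn_integral_set_ennreal)
  moreover have "0 \<le> besselK0 x"
    unfolding besselK0_def set_lebesgue_integral_def
    by (auto intro!: Bochner_Integration.integral_nonneg)
  ultimately show ?thesis
    by (simp add: nn_integral_lborel_even ennreal_mult)
qed

lemma nn_integral_exp_neg_cosh:
  assumes "s > 0" and int: "integrable lborel (\<lambda>u. exp (- (2 * s) * cosh u))"
  shows "(\<integral>\<^sup>+u. ennreal (exp (- (2 * s) * cosh u)) \<partial>lborel)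
       = (\<integral>\<^sup>+v\<in>{0<..}. ennreal (exp (- v - s\<^sup>2 / v) / v) \<partial>lborel)"
proof -
  define f where "f v = exp (- v - s\<^sup>2 / v) / v" for v
  define g where "g u = s * exp u" for u
  have fg: "f (g u) * g u = exp (- (2 * s) * cosh u)" for u
  proof -
    have "- (s * exp u) - s\<^sup>2 / (s * exp u) = - (2 * s) * cosh u"
      using assms by (simp add: cosh_field_def field_simps power2_eq_square exp_minus)
    then show ?thesis unfolding f_def g_def using assms by simp
  qed
  have lim_bot: "((ereal \<circ> g \<circ> real_of_ereal) \<longlongrightarrow> ereal 0) (at_right (-\<infinity>))"
    unfolding ereal_tendsto_simps g_def using assms by real_asymp
  have lim_top: "((ereal \<circ> g \<circ> real_of_ereal) \<longlongrightarrow> \<infinity>) (at_left \<infinity>)"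
    unfolding ereal_tendsto_simps g_def using assms by real_asymp
  have "set_integrable lborel (einterval (-\<infinity>) \<infinity>) (\<lambda>u. f (g u) * g u)"
    unfolding set_integrable_def fg using int by (simp add: einterval_iff)
  moreover have "DERIV g u :> g u" "isCont f (g u)" "isCont g u" "0 \<le> f (g u)" "0 \<le> g u" for u
    using assms unfolding f_def[abs_def] g_def[abs_def]
    by (auto intro!: derivative_eq_intros continuous_intros)
  ultimately have int_f: "set_integrable lborel (einterval 0 \<infinity>) f"
    and subst: "(LBINT v=0..\<infinity>. f v) = (LBINT u=-\<infinity>..\<infinity>. f (g u) * g u)"
    using interval_integral_substitution_nonneg[of "-\<infinity>" \<infinity> g g f, OF _ _ _ _ _ _ lim_bot lim_top]
    by (simp_all add: zero_ereal_def)
  have "(\<integral>\<^sup>+v\<in>{0<..}. ennreal (f v) \<partial>lborel) = ennreal (LBINT v=0..\<infinity>. f v)"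
    using int_f
    by (subst nn_integral_set_ennreal, subst nn_integral_eq_integral)
       (auto simp: f_def set_integrable_def interval_lebesgue_integral_def set_lebesgue_integral_def
          mult.commute zero_ereal_def split: split_indicator)
  also have "\<dots> = ennreal (\<integral>u. exp (- (2 * s) * cosh u) \<partial>lborel)"
    unfolding subst fg by (simp add: interval_lebesgue_integral_def set_lebesgue_integral_def einterval_iff)
  also have "\<dots> = (\<integral>\<^sup>+u. ennreal (exp (- (2 * s) * cosh u)) \<partial>lborel)"
    using int by (subst nn_integral_eq_integral) auto
  finally show ?thesis unfolding f_def by (rule sym)
qed

lemma besselK0_exp_mixture:
  assumes "x > 0"
  shows "ennreal (2 * besselK0 (2 * sqrt x))
       = (\<integral>\<^sup>+v\<in>{0<..}. ennreal (exp (- v) / v) * ennreal (exp (- x / v)) \<partial>lborel)"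
proof -
  have K: "ennreal (2 * besselK0 (2 * sqrt x)) = (\<integral>\<^sup>+u. ennreal (exp (- (2 * sqrt x) * cosh u)) \<partial>lborel)"
    using assms by (intro ennreal_besselK0) simp
  have "(\<integral>\<^sup>+u. ennreal (exp (- (2 * sqrt x) * cosh u)) \<partial>lborel) < \<infinity>"
    unfolding K[symmetric] by simp
  then have "integrable lborel (\<lambda>u. exp (- (2 * sqrt x) * cosh u))"
    by (intro integrableI_nonneg AE_I2) auto
  then have "ennreal (2 * besselK0 (2 * sqrt x))
           = (\<integral>\<^sup>+v\<in>{0<..}. ennreal (exp (- v - (sqrt x)\<^sup>2 / v) / v) \<partial>lborel)"
    unfolding K using assms by (intro nn_integral_exp_neg_cosh) auto
  also have "\<dots> = (\<integral>\<^sup>+v\<in>{0<..}. ennreal (exp (- v) / v) * ennreal (exp (- x / v)) \<partial>lborel)"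
  proof (intro nn_integral_cong)
    fix v :: real
    have "exp (- v - (sqrt x)\<^sup>2 / v) / v = exp (- v) / v * exp (- x / v)"
      using assms by (simp add: exp_diff exp_minus field_simps)
    then show "ennreal (exp (- v - (sqrt x)\<^sup>2 / v) / v) * indicator {0<..} v
             = ennreal (exp (- v) / v) * ennreal (exp (- x / v)) * indicator {0<..} v"
      by (cases "v > 0") (simp_all add: ennreal_mult'[symmetric])
  qed
  finally show ?thesis .
qed

lemma nn_integral_besselK0_density:
  fixes h :: "real \<Rightarrow> ennreal"
  assumes [measurable]: "h \<in> borel_measurable borel"
  shows "(\<integral>\<^sup>+x\<in>{0<..}. ennreal (2 * besselK0 (2 * sqrt x)) * h x \<partial>lborel)
       = (\<integral>\<^sup>+v\<in>{0<..}. ennreal (exp (- v) / v) * (\<integral>\<^sup>+x\<in>{0<..}. ennreal (exp (- x / v)) * h x \<partial>lborel) \<partial>lborel)"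
proof -
  have "(\<integral>\<^sup>+x\<in>{0<..}. ennreal (2 * besselK0 (2 * sqrt x)) * h x \<partial>lborel)
      = (\<integral>\<^sup>+x. \<integral>\<^sup>+v. ennreal (exp (- v) / v) * indicator {0<..} v *
            (ennreal (exp (- x / v)) * h x * indicator {0<..} x) \<partial>lborel \<partial>lborel)"
  proof (intro nn_integral_cong)
    fix x :: real
    show "ennreal (2 * besselK0 (2 * sqrt x)) * h x * indicator {0<..} x
        = (\<integral>\<^sup>+v. ennreal (exp (- v) / v) * indicator {0<..} v *
            (ennreal (exp (- x / v)) * h x * indicator {0<..} x) \<partial>lborel)"
    proof (cases "x > 0")
      case True
      then show ?thesis
        unfolding besselK0_exp_mixture[OF True]
        by (subst nn_integral_multc[symmetric], measurable) (auto intro!: nn_integral_cong simp: ac_simps)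
    qed simp
  qed
  also have "\<dots> = (\<integral>\<^sup>+v. \<integral>\<^sup>+x. ennreal (exp (- v) / v) * indicator {0<..} v *
            (ennreal (exp (- x / v)) * h x * indicator {0<..} x) \<partial>lborel \<partial>lborel)"
    by (rule lborel_pair.Fubini') measurable
  also have "\<dots> = (\<integral>\<^sup>+v\<in>{0<..}. ennreal (exp (- v) / v) * (\<integral>\<^sup>+x\<in>{0<..}. ennreal (exp (- x / v)) * h x \<partial>lborel) \<partial>lborel)"
  proof (intro nn_integral_cong)
    fix v :: real
    show "(\<integral>\<^sup>+x. ennreal (exp (- v) / v) * indicator {0<..} v *
            (ennreal (exp (- x / v)) * h x * indicator {0<..} x) \<partial>lborel)
        = ennreal (exp (- v) / v) * (\<integral>\<^sup>+x\<in>{0<..}. ennreal (exp (- x / v)) * h x \<partial>lborel) * indicator {0<..} v"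
      by (subst nn_integral_cmult[symmetric], measurable)
         (auto simp: ac_simps intro!: nn_integral_cong split: split_indicator)
  qed
  finally show ?thesis .
qed

section \<open>The Whittaker integrand\<close>

lemma tricomiU_1_1:
  assumes "z > 0"
  shows "ennreal (tricomiU 1 1 z) = (\<integral>\<^sup>+v\<in>{0<..}. ennreal (exp (- v) / (z + v)) \<partial>lborel)"
proof -
  define h where "h t = exp (- z * t) / (1 + t) * indicator {0<..} t" for t :: real
  have h_nonneg: "0 \<le> h t" for t
    by (simp add: h_def split: split_indicator)
  have h_meas[measurable]: "h \<in> borel_measurable borel"
    unfolding h_def by measurable
  have U: "tricomiU 1 1 z = (\<integral>t. h t \<partial>lborel)"
    unfolding tricomiU_def set_lebesgue_integral_def h_def
    by (auto intro!: Bochner_Integration.integral_cong simp: powr_minus_divide split: split_indicator)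
  have "(\<integral>\<^sup>+t. ennreal (h t) \<partial>lborel) \<le> (\<integral>\<^sup>+t\<in>{0..}. ennreal (exp (- z * t)) \<partial>lborel)"
    by (intro nn_integral_mono) (auto simp: h_def divide_le_eq split: split_indicator)
  also have "\<dots> = ennreal (1 / z)"
    by (rule nn_integral_exp_neg_atLeast[OF assms])
  also have "\<dots> < \<infinity>"
    by simp
  finally have "integrable lborel h"
    using h_nonneg by (intro integrableI_nonneg AE_I2) auto
  then have "ennreal (tricomiU 1 1 z) = (\<integral>\<^sup>+t. ennreal (h t) \<partial>lborel)"
    unfolding U using h_nonneg by (subst nn_integral_eq_integral) auto
  also have "\<dots> = ennreal (1 / z) * (\<integral>\<^sup>+v. ennreal (h (0 + (1 / z) * v)) \<partial>lborel)"
    by (subst nn_integral_real_affine[where c="1 / z" and t=0]) (use assms in auto)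
  also have "\<dots> = (\<integral>\<^sup>+v. ennreal (1 / z) * ennreal (h (0 + (1 / z) * v)) \<partial>lborel)"
    by (rule nn_integral_cmult[symmetric]) (auto simp: h_def)
  also have "\<dots> = (\<integral>\<^sup>+v\<in>{0<..}. ennreal (exp (- v) / (z + v)) \<partial>lborel)"
  proof (intro nn_integral_cong)
    fix v :: real
    have "1 / z * (exp (- z * (1 / z * v)) / (1 + 1 / z * v)) = exp (- v) / (z + v)"
      using assms by (simp add: field_simps)
    then show "ennreal (1 / z) * ennreal (h (0 + 1 / z * v)) = ennreal (exp (- v) / (z + v)) * indicator {0<..} v"
      using assms by (auto simp: h_def ennreal_mult'[symmetric] zero_less_divide_iff split: split_indicator)
  qed
  finally show ?thesis .
qed

lemma whittakerW_minus_half_zero: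
  assumes "z > 0"
  shows "whittakerW (-1/2) 0 z = exp (- z / 2) * sqrt z * tricomiU 1 1 z"
  using assms by (simp add: whittakerW_def powr_half_sqrt)

lemma has_real_derivative_sin_sq_ratio_primitive:
  assumes "b > 0" "cos x \<noteq> 0"
  shows "((\<lambda>x. x - sqrt (b / (1 + b)) * arctan (sqrt ((1 + b) / b) * tan x))
          has_real_derivative (sin x)\<^sup>2 / ((sin x)\<^sup>2 + b)) (at x)"
proof -
  define k where "k = sqrt ((1 + b) / b)"
  have k2: "k\<^sup>2 = (1 + b) / b" and kk: "sqrt (b / (1 + b)) * k = 1"
    unfolding k_def using assms by (simp_all add: real_sqrt_mult[symmetric])
  have "0 < (cos x)\<^sup>2" "0 < (sin x)\<^sup>2 + b"
    using assms by (simp_all add: add_nonneg_pos)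
  have "1 - sqrt (b / (1 + b)) * (k * (1 + (tan x)\<^sup>2)) / (1 + (k * tan x)\<^sup>2)
      = 1 - (1 + (tan x)\<^sup>2) / (1 + k\<^sup>2 * (tan x)\<^sup>2)"
    by (simp add: kk power_mult_distrib mult.assoc[symmetric])
  also have "\<dots> = 1 - 1 / ((cos x)\<^sup>2 + k\<^sup>2 * (sin x)\<^sup>2)"
    using assms \<open>0 < (cos x)\<^sup>2\<close> by (simp add: tan_def power_divide field_simps)
  also have "\<dots> = (sin x)\<^sup>2 / ((sin x)\<^sup>2 + b)"
    using assms \<open>0 < (sin x)\<^sup>2 + b\<close> unfolding k2 cos_squared_eq by (simp add: field_simps)
  finally have "1 - sqrt (b / (1 + b)) * (k * (1 + (tan x)\<^sup>2)) / (1 + (k * tan x)\<^sup>2)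
           = (sin x)\<^sup>2 / ((sin x)\<^sup>2 + b)" .
  moreover have "((\<lambda>x. x - sqrt (b / (1 + b)) * arctan (k * tan x)) has_real_derivative
           1 - sqrt (b / (1 + b)) * (k * (1 + (tan x)\<^sup>2)) / (1 + (k * tan x)\<^sup>2)) (at x)"
    using assms by (auto intro!: derivative_eq_intros simp: tan_sec power_inverse divide_simps)
  ultimately show ?thesis
    unfolding k_def by simp
qed

lemma nn_integral_sin_sq_ratio:
  assumes "b > 0"
  shows "(\<integral>\<^sup>+\<theta>\<in>{0<..<pi/2}. ennreal ((sin \<theta>)\<^sup>2 / ((sin \<theta>)\<^sup>2 + b)) \<partial>lborel)
       = ennreal (pi / 2 * (1 - sqrt (b / (1 + b))))"
proof -
  define k where "k = sqrt ((1 + b) / b)"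
  define F where "F x = x - sqrt (b / (1 + b)) * arctan (k * tan x)" for x
  define f where "f x = (sin x)\<^sup>2 / ((sin x)\<^sup>2 + b)" for x
  have f_nonneg: "0 \<le> f x" for x
    unfolding f_def using assms by (simp add: add_nonneg_pos)
  have "isCont F 0"
    unfolding F_def by (intro continuous_intros) auto
  then have "(F \<longlongrightarrow> F 0) (at_right 0)"
    by (rule tendsto_mono[OF at_within_le_at isContD])
  then have lim_0: "(F \<longlongrightarrow> 0) (at_right 0)"
    by (simp add: F_def)
  have "filterlim (\<lambda>x. k * tan x) at_top (at_left (pi/2))"
    using assms unfolding k_def
    by (intro filterlim_tendsto_pos_mult_at_top[OF tendsto_const] filterlim_tan_at_left) auto
  then have "((\<lambda>x. arctan (k * tan x)) \<longlongrightarrow> pi/2) (at_left (pi/2))"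
    by (rule filterlim_compose[OF tendsto_arctan_at_top])
  then have lim_pi2: "(F \<longlongrightarrow> pi/2 - sqrt (b / (1 + b)) * (pi/2)) (at_left (pi/2))"
    unfolding F_def by (intro tendsto_intros) (auto intro: tendsto_ident_at)
  have "DERIV F x :> f x" "isCont f x" if "0 < x" "x < pi/2" for x
  proof -
    have "cos x \<noteq> 0" using that cos_gt_zero_pi[of x] by auto
    then show "DERIV F x :> f x"
      using has_real_derivative_sin_sq_ratio_primitive[OF assms] unfolding F_def f_def k_def by blast
    show "isCont f x"
      unfolding f_def using assms add_nonneg_pos[of "(sin x)\<^sup>2" b] by (intro continuous_intros) auto
  qed
  then have int: "set_integrable lborel (einterval 0 (pi/2)) f"
    and val: "(LBINT x=0..pi/2. f x) = (pi/2 - sqrt (b / (1 + b)) * (pi/2)) - 0"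
    using f_nonneg lim_0 lim_pi2
    by (intro interval_integral_FTC_nonneg[where F=F];
        auto simp: ereal_tendsto_simps zero_ereal_def)+
  have "(\<integral>\<^sup>+\<theta>\<in>{0<..<pi/2}. ennreal (f \<theta>) \<partial>lborel) = ennreal (LBINT x=0..pi/2. f x)"
    using int f_nonneg
    by (subst nn_integral_set_ennreal, subst nn_integral_eq_integral)
       (auto simp: set_integrable_def interval_lebesgue_integral_def set_lebesgue_integral_def
          zero_ereal_def mult.commute)
  also have "\<dots> = ennreal (pi / 2 * (1 - sqrt (b / (1 + b))))"
    unfolding val by (simp add: algebra_simps)
  finally show ?thesis
    unfolding f_def .
qed

lemma ennreal_exp_half_whittakerW:
  assumes "z > 0" "s \<ge> 0"
  shows "ennreal (exp (z / 2) * whittakerW (-1/2) 0 z * s)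
       = (\<integral>\<^sup>+v\<in>{0<..}. ennreal (sqrt z * s * (exp (- v) / (z + v))) \<partial>lborel)"
proof -
  have "exp (z / 2) * whittakerW (-1/2) 0 z = sqrt z * tricomiU 1 1 z"
    using assms unfolding whittakerW_minus_half_zero[OF assms(1)] by (simp add: exp_minus field_simps)
  then have "ennreal (exp (z / 2) * whittakerW (-1/2) 0 z * s) = ennreal (sqrt z * s) * ennreal (tricomiU 1 1 z)"
    using assms by (subst ennreal_mult[symmetric]) (auto simp: tricomiU_nonneg mult_ac)
  also have "\<dots> = ennreal (sqrt z * s) * (\<integral>\<^sup>+v\<in>{0<..}. ennreal (exp (- v) / (z + v)) \<partial>lborel)"
    using assms by (simp add: tricomiU_1_1)
  also have "\<dots> = (\<integral>\<^sup>+v\<in>{0<..}. ennreal (sqrt z * s * (exp (- v) / (z + v))) \<partial>lborel)"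
    using assms
    by (subst nn_integral_cmult[symmetric], measurable)
       (auto intro!: nn_integral_cong simp: ennreal_mult'[symmetric] split: split_indicator)
  finally show ?thesis .
qed

section \<open>Both sides as one integral\<close>

lemma sqrt_div_add_le_one: "0 \<le> x \<Longrightarrow> 0 < y \<Longrightarrow> sqrt (x / (x + y)) \<le> 1"
  by simp

text \<open>\<open>ber_kernel c v\<close> is the error probability conditioned on the mixing variable \<open>v\<close> of
  \<open>X\<close> (given \<open>v\<close>, \<open>X\<close> is exponential with mean \<open>v\<close>), times the mixing density \<open>e\<^sup>-\<^sup>v\<close>.\<close>

definition ber_kernel :: "real \<Rightarrow> real \<Rightarrow> real" where
  "ber_kernel c v = exp (- v) / 2 * (1 - sqrt (c * v / (c * v + 4)))"

lemma borel_measurable_ber_kernel[measurable]: "ber_kernel c \<in> borel_measurable borel"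
  unfolding ber_kernel_def[abs_def] by measurable

lemma ber_kernel_nonneg:
  assumes "c > 0" "v > 0"
  shows "0 \<le> ber_kernel c v"
  using assms sqrt_div_add_le_one[of "c * v" 4] by (simp add: ber_kernel_def)

lemma nn_integral_exp_gaussQ_ber_kernel:
  assumes "c > 0" "v > 0"
  shows "ennreal (exp (- v) / v) * (\<integral>\<^sup>+x\<in>{0<..}. ennreal (exp (- x / v)) * ennreal (gaussQ (sqrt (c * x / 2))) \<partial>lborel)
       = ennreal (ber_kernel c v)"
proof -
  have "(\<integral>\<^sup>+x\<in>{0<..}. ennreal (exp (- x / v)) * ennreal (gaussQ (sqrt (c * x / 2))) \<partial>lborel)
      = (\<integral>\<^sup>+x\<in>{0<..}. ennreal (exp (- (1 / v) * x) * gaussQ (sqrt (c / 2 * x))) \<partial>lborel)"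
    by (intro nn_integral_cong) (simp add: ennreal_mult gaussQ_nonneg)
  also have "\<dots> = ennreal ((1 - sqrt (c / 2 / (c / 2 + 2 * (1 / v)))) / (2 * (1 / v)))"
    using assms by (intro nn_integral_exp_neg_gaussQ_sqrt) auto
  also have "c / 2 / (c / 2 + 2 * (1 / v)) = c * v / (c * v + 4)"
    using assms by (simp add: field_simps)
  finally have "ennreal (exp (- v) / v) * (\<integral>\<^sup>+x\<in>{0<..}. ennreal (exp (- x / v)) * ennreal (gaussQ (sqrt (c * x / 2))) \<partial>lborel)
      = ennreal (exp (- v) / v * ((1 - sqrt (c * v / (c * v + 4))) / (2 * (1 / v))))"
    using assms sqrt_div_add_le_one[of "c * v" 4] by (subst ennreal_mult) auto
  also have "exp (- v) / v * ((1 - sqrt (c * v / (c * v + 4))) / (2 * (1 / v))) = ber_kernel c v"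
    using assms by (simp add: ber_kernel_def)
  finally show ?thesis .
qed

lemma expectation_gaussQ_eq_ber_kernel:
  assumes "c > 0" and "prob_space M"
    and X: "distributed M lborel X (\<lambda>x. ennreal (indicator {0<..} x * (2 * besselK0 (2 * sqrt x))))"
  shows "integral\<^sup>L M (\<lambda>\<omega>. gaussQ (sqrt (c * X \<omega> / 2)))
       = enn2real (\<integral>\<^sup>+v\<in>{0<..}. ennreal (ber_kernel c v) \<partial>lborel)"
proof -
  have [measurable]: "X \<in> borel_measurable M"
    using distributed_measurable[OF X] by simp
  have "(\<integral>\<^sup>+\<omega>. ennreal (gaussQ (sqrt (c * X \<omega> / 2))) \<partial>M)
      = (\<integral>\<^sup>+x. ennreal (indicator {0<..} x * (2 * besselK0 (2 * sqrt x))) * ennreal (gaussQ (sqrt (c * x / 2))) \<partial>lborel)"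
    by (rule distributed_nn_integral[OF X, symmetric]) measurable
  also have "\<dots> = (\<integral>\<^sup>+x\<in>{0<..}. ennreal (2 * besselK0 (2 * sqrt x)) * ennreal (gaussQ (sqrt (c * x / 2))) \<partial>lborel)"
    by (intro nn_integral_cong) (simp split: split_indicator)
  also have "\<dots> = (\<integral>\<^sup>+v\<in>{0<..}. ennreal (exp (- v) / v) *
        (\<integral>\<^sup>+x\<in>{0<..}. ennreal (exp (- x / v)) * ennreal (gaussQ (sqrt (c * x / 2))) \<partial>lborel) \<partial>lborel)"
    by (rule nn_integral_besselK0_density) measurable
  also have "\<dots> = (\<integral>\<^sup>+v\<in>{0<..}. ennreal (ber_kernel c v) \<partial>lborel)"
  proof (intro nn_integral_cong)
    fix v :: real
    show "ennreal (exp (- v) / v) *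
        (\<integral>\<^sup>+x\<in>{0<..}. ennreal (exp (- x / v)) * ennreal (gaussQ (sqrt (c * x / 2))) \<partial>lborel) * indicator {0<..} v
        = ennreal (ber_kernel c v) * indicator {0<..} v"
      using nn_integral_exp_gaussQ_ber_kernel[OF assms(1), of v] by (cases "v > 0") simp_all
  qed
  finally show ?thesis
    by (simp add: integral_eq_nn_integral gaussQ_nonneg)
qed

lemma nn_integral_whittaker_integrand_theta:
  assumes "c > 0" "v > 0"
  shows "(\<integral>\<^sup>+\<theta>\<in>{0<..<pi/2}. ennreal (sqrt (4 * (sin \<theta>)\<^sup>2 / c) * sin \<theta> * (exp (- v) / (4 * (sin \<theta>)\<^sup>2 / c + v))) \<partial>lborel)
       = ennreal (sqrt c * pi / 2 * ber_kernel c v)"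
proof -
  have integrand_eq: "sqrt (4 * (sin \<theta>)\<^sup>2 / c) * sin \<theta> * (exp (- v) / (4 * (sin \<theta>)\<^sup>2 / c + v))
      = exp (- v) * sqrt c / 2 * ((sin \<theta>)\<^sup>2 / ((sin \<theta>)\<^sup>2 + c * v / 4))"
    if "0 < sin \<theta>" for \<theta>
  proof -
    define q where "q = sqrt c"
    have "q > 0" and c_eq: "c = q\<^sup>2"
      using assms by (simp_all add: q_def)
    have "sqrt (4 * (sin \<theta>)\<^sup>2 / c) = 2 * sin \<theta> / q"
      using assms that by (simp add: q_def real_sqrt_divide real_sqrt_mult)
    moreover have "0 < (sin \<theta>)\<^sup>2 * 4 + q\<^sup>2 * v"
      using \<open>q > 0\<close> assms(2) by (intro add_nonneg_pos) auto
    ultimately show ?thesis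
      unfolding q_def[symmetric] using \<open>q > 0\<close> assms(2) that
      by (simp add: c_eq field_simps power2_eq_square)
  qed
  have "(\<integral>\<^sup>+\<theta>\<in>{0<..<pi/2}. ennreal (sqrt (4 * (sin \<theta>)\<^sup>2 / c) * sin \<theta> * (exp (- v) / (4 * (sin \<theta>)\<^sup>2 / c + v))) \<partial>lborel)
      = (\<integral>\<^sup>+\<theta>. ennreal (exp (- v) * sqrt c / 2) * (ennreal ((sin \<theta>)\<^sup>2 / ((sin \<theta>)\<^sup>2 + c * v / 4)) * indicator {0<..<pi/2} \<theta>) \<partial>lborel)"
  proof (intro nn_integral_cong)
    fix \<theta> :: real
    show "ennreal (sqrt (4 * (sin \<theta>)\<^sup>2 / c) * sin \<theta> * (exp (- v) / (4 * (sin \<theta>)\<^sup>2 / c + v))) * indicator {0<..<pi/2} \<theta>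
        = ennreal (exp (- v) * sqrt c / 2) * (ennreal ((sin \<theta>)\<^sup>2 / ((sin \<theta>)\<^sup>2 + c * v / 4)) * indicator {0<..<pi/2} \<theta>)"
    proof (cases "\<theta> \<in> {0<..<pi/2}")
      case True
      then have "0 < sin \<theta>" by (intro sin_gt_zero) auto
      then show ?thesis
        using True assms by (simp only: integrand_eq) (subst ennreal_mult', simp_all)
    qed simp
  qed
  also have "\<dots> = ennreal (exp (- v) * sqrt c / 2) * ennreal (pi / 2 * (1 - sqrt (c * v / 4 / (1 + c * v / 4))))"
    using assms by (subst nn_integral_cmult) (auto simp: nn_integral_sin_sq_ratio)
  also have "c * v / 4 / (1 + c * v / 4) = c * v / (c * v + 4)"
    using assms by (simp add: field_simps)
  also have "ennreal (exp (- v) * sqrt c / 2) * ennreal (pi / 2 * (1 - sqrt (c * v / (c * v + 4))))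
           = ennreal (sqrt c * pi / 2 * ber_kernel c v)"
    using assms sqrt_div_add_le_one[of "c * v" 4]
    by (subst ennreal_mult[symmetric]) (auto simp: ber_kernel_def)
  finally show ?thesis .
qed

lemma whittaker_integral_eq_ber_kernel:
  assumes "c > 0"
  shows "(LBINT \<theta>=0..pi/2. exp (2 * (sin \<theta>)\<^sup>2 / c) * whittakerW (-1/2) 0 (4 * (sin \<theta>)\<^sup>2 / c) * sin \<theta>)
       = sqrt c * pi / 2 * enn2real (\<integral>\<^sup>+v\<in>{0<..}. ennreal (ber_kernel c v) \<partial>lborel)"
proof -
  define w where "w \<theta> v = sqrt (4 * (sin \<theta>)\<^sup>2 / c) * sin \<theta> * (exp (- v) / (4 * (sin \<theta>)\<^sup>2 / c + v))" for \<theta> v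
  define k where "k \<theta> = exp (2 * (sin \<theta>)\<^sup>2 / c) * whittakerW (-1/2) 0 (4 * (sin \<theta>)\<^sup>2 / c) * sin \<theta>" for \<theta>
  have k_eq: "ennreal (k \<theta>) = (\<integral>\<^sup>+v\<in>{0<..}. ennreal (w \<theta> v) \<partial>lborel)" if "\<theta> \<in> {0<..<pi/2}" for \<theta>
  proof -
    have "0 < sin \<theta>" using that by (intro sin_gt_zero) auto
    moreover have "2 * (sin \<theta>)\<^sup>2 / c = (4 * (sin \<theta>)\<^sup>2 / c) / 2" by simp
    ultimately show ?thesis
      unfolding k_def w_def using assms by (simp only:) (intro ennreal_exp_half_whittakerW; simp)
  qed
  have k_nonneg: "0 \<le> k \<theta>" if "\<theta> \<in> {0<..<pi/2}" for \<theta>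
  proof -
    have "0 < sin \<theta>" using that by (intro sin_gt_zero) auto
    moreover from this have "0 < 4 * (sin \<theta>)\<^sup>2 / c" using assms by simp
    ultimately show ?thesis
      unfolding k_def whittakerW_minus_half_zero[OF \<open>0 < 4 * (sin \<theta>)\<^sup>2 / c\<close>]
      by (simp add: tricomiU_nonneg)
  qed
  have k_meas[measurable]: "k \<in> borel_measurable borel"
    unfolding k_def whittakerW_def by measurable
  have "(LBINT \<theta>=0..pi/2. k \<theta>) = enn2real (\<integral>\<^sup>+\<theta>\<in>{0<..<pi/2}. ennreal (k \<theta>) \<partial>lborel)"
    using interval_integral_nonneg_eq_nn_integral[of k 0 "pi/2"] k_nonneg by (simp add: zero_ereal_def)
  also have "(\<integral>\<^sup>+\<theta>\<in>{0<..<pi/2}. ennreal (k \<theta>) \<partial>lborel)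
           = (\<integral>\<^sup>+\<theta>. \<integral>\<^sup>+v. ennreal (w \<theta> v) * indicator {0<..} v * indicator {0<..<pi/2} \<theta> \<partial>lborel \<partial>lborel)"
    by (intro nn_integral_cong) (auto simp: k_eq nn_integral_multc split: split_indicator)
  also have "\<dots> = (\<integral>\<^sup>+v. \<integral>\<^sup>+\<theta>. ennreal (w \<theta> v) * indicator {0<..} v * indicator {0<..<pi/2} \<theta> \<partial>lborel \<partial>lborel)"
    unfolding w_def by (rule lborel_pair.Fubini'[symmetric]) measurable
  also have "\<dots> = (\<integral>\<^sup>+v. ennreal (sqrt c * pi / 2) * (ennreal (ber_kernel c v) * indicator {0<..} v) \<partial>lborel)"
  proof (intro nn_integral_cong)
    fix v :: real
    show "(\<integral>\<^sup>+\<theta>. ennreal (w \<theta> v) * indicator {0<..} v * indicator {0<..<pi/2} \<theta> \<partial>lborel)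
        = ennreal (sqrt c * pi / 2) * (ennreal (ber_kernel c v) * indicator {0<..} v)"
    proof (cases "v > 0")
      case True
      then show ?thesis
        using nn_integral_whittaker_integrand_theta[OF assms True] ber_kernel_nonneg[OF assms True] assms
        by (simp add: w_def ennreal_mult'[symmetric])
    qed simp
  qed
  also have "\<dots> = ennreal (sqrt c * pi / 2) * (\<integral>\<^sup>+v\<in>{0<..}. ennreal (ber_kernel c v) \<partial>lborel)"
    by (rule nn_integral_cmult) measurable
  finally show ?thesis
    using assms unfolding k_def by (simp add: enn2real_mult)
qed

theorem mainTheorem7:
  fixes \<rho> L \<eta> :: real and M :: "'a measure" and X :: "'a \<Rightarrow> real"
  assumes "\<rho> > 0" and "L \<ge> 1" and "\<eta> > 0"
    and "prob_space M"
    and "distributed M lborel X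
           (\<lambda>x. ennreal (indicator {0<..} x * (2 * besselK0 (2 * sqrt x))))"
  shows "prob_space.expectation M (\<lambda>\<omega>. gaussQ (sqrt (\<rho> * L\<^sup>2 * \<eta> * X \<omega> / 2)))
       = 2 / (pi * L * sqrt (\<rho> * \<eta>)) *
         (LBINT \<theta>=0..pi/2. exp (2 * (sin \<theta>)\<^sup>2 / (\<rho> * L\<^sup>2 * \<eta>)) *
            whittakerW (-1/2) 0 (4 * (sin \<theta>)\<^sup>2 / (\<rho> * L\<^sup>2 * \<eta>)) * sin \<theta>)"
proof -
  define c where "c = \<rho> * L\<^sup>2 * \<eta>"
  define E where "E = enn2real (\<integral>\<^sup>+v\<in>{0<..}. ennreal (ber_kernel c v) \<partial>lborel)"
  have "c > 0"
    using assms by (simp add: c_def)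
  have "sqrt c = L * sqrt (\<rho> * \<eta>)"
    using assms by (simp add: c_def real_sqrt_mult ac_simps)
  moreover have "L * sqrt (\<rho> * \<eta>) > 0"
    using assms by simp
  moreover have "prob_space.expectation M (\<lambda>\<omega>. gaussQ (sqrt (\<rho> * L\<^sup>2 * \<eta> * X \<omega> / 2))) = E"
    using expectation_gaussQ_eq_ber_kernel[OF \<open>c > 0\<close> assms(4,5)] by (simp add: c_def E_def)
  moreover have "(LBINT \<theta>=0..pi/2. exp (2 * (sin \<theta>)\<^sup>2 / (\<rho> * L\<^sup>2 * \<eta>)) *
            whittakerW (-1/2) 0 (4 * (sin \<theta>)\<^sup>2 / (\<rho> * L\<^sup>2 * \<eta>)) * sin \<theta>) = sqrt c * pi / 2 * E"
    using whittaker_integral_eq_ber_kernel[OF \<open>c > 0\<close>] by (simp add: c_def E_def)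
  ultimately show ?thesis
    using assms by (simp add: field_simps)
qed

end
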